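(* Let $v\ge1$. If there exists an OA$(2,4,v)$, then there exists a $(2,3,v)$-AONT.
   Context: An orthogonal array OA$(t,k,v)$ over an alphabet $X$ with $|X|=v$ is a $v^t\times k$ array with entries in $X$ such that for every set of $t$ columns, every $t$-tuple of elements of $X$ occurs exactly once as a row of the subarray formed by these columns. Let $0\le t\le s$. A $(t,s,v)$-AONT is a bijection $\phi:X^s\to X^s$ such that for every $I\subseteq\{1,\dots,s\}$ with $|I|=t$ and every $J\subseteq\{1,\dots,s\}$ with $|J|=s-t$, the map $x\mapsto\big((x_i)_{i\in I},(\phi(x)_j)_{j\in J}\big)$ is a bijection $X^s\to X^t\times X^{s-t}$. *)

theory Defs
  imports "HOL-Library.FuncSet"
begin

definition words :: "'a set \<Rightarrow> nat \<Rightarrow> (nat \<Rightarrow> 'a) set" where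
  "words X n = PiE {0..<n} (\<lambda>_. X)"

text \<open>An orthogonal array OA(t,k,v) over X (with card X = v): a v^t x k array,
  given as a family of rows A i (i < v^t), each row a word of length k, such that for
  every set C of t columns and every t-tuple y on C there is exactly one row whose
  restriction to C equals y.\<close>
definition is_OA :: "nat \<Rightarrow> nat \<Rightarrow> 'a set \<Rightarrow> (nat \<Rightarrow> nat \<Rightarrow> 'a) \<Rightarrow> bool" where
  "is_OA t k X A \<longleftrightarrow>
     (\<forall>i < card X ^ t. A i \<in> words X k) \<and>
     (\<forall>C. C \<subseteq> {0..<k} \<and> card C = t \<longrightarrow>
        (\<forall>y \<in> PiE C (\<lambda>_. X). \<exists>!i. i < card X ^ t \<and> restrict (A i) C = y))"

definition OA_exists :: "nat \<Rightarrow> nat \<Rightarrow> 'a set \<Rightarrow> bool" where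
  "OA_exists t k X \<longleftrightarrow> (\<exists>A. is_OA t k X A)"

definition is_AONT :: "nat \<Rightarrow> nat \<Rightarrow> 'a set \<Rightarrow> ((nat \<Rightarrow> 'a) \<Rightarrow> (nat \<Rightarrow> 'a)) \<Rightarrow> bool" where
  "is_AONT t s X \<phi> \<longleftrightarrow>
     t \<le> s \<and>
     bij_betw \<phi> (words X s) (words X s) \<and>
     (\<forall>I J. I \<subseteq> {0..<s} \<and> card I = t \<and> J \<subseteq> {0..<s} \<and> card J = s - t \<longrightarrow>
        bij_betw (\<lambda>x. (restrict x I, restrict (\<phi> x) J)) (words X s)
          (PiE I (\<lambda>_. X) \<times> PiE J (\<lambda>_. X)))"

end

theory Submission
  imports Defs
begin

text \<open>Columns 0 and 1 of an OA(2,4,v) index its rows by pairs of symbols, so columns 2 and 3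
  read as two orthogonal Latin squares \<open>L, M\<close>. With \<open>u = L x\<^sub>0 x\<^sub>1\<close> and \<open>w = M x\<^sub>0 x\<^sub>1\<close> put
  \<open>\<phi>(x) = (L u x\<^sub>2, M u x\<^sub>2, L w x\<^sub>2)\<close>. Each output has the shape \<open>Q (P x\<^sub>0 x\<^sub>1) x\<^sub>2\<close> with Latin
  squares \<open>P, Q\<close>, so together with any two inputs it determines the third; by counting, this
  is the AONT condition for \<open>t = s - 1\<close>. And \<open>\<phi>\<close> is injective: the first two outputs give
  \<open>(u, x\<^sub>2)\<close> by orthogonality, the third then gives \<open>w\<close>, and \<open>(u, w)\<close> gives \<open>(x\<^sub>0, x\<^sub>1)\<close>.\<close>

lemma bij_betw_if_inj_on_card_eq:
  assumes "finite B" "inj_on f A" "f ` A \<subseteq> B" "card A = card B"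
  shows "bij_betw f A B"
  unfolding bij_betw_def using assms card_image card_subset_eq by metis

lemma card_words: "finite X \<Longrightarrow> card (words X n) = card X ^ n"
  by (simp add: words_def card_PiE)

lemma words_undefined: "x \<in> words X n \<Longrightarrow> \<not> i < n \<Longrightarrow> x i = undefined"
  unfolding words_def by (erule PiE_arb) simp

lemma words_mem: "x \<in> words X n \<Longrightarrow> i < n \<Longrightarrow> x i \<in> X"
  unfolding words_def by auto

lemma words_memI:
  "(\<And>i. i < n \<Longrightarrow> x i \<in> X) \<Longrightarrow> (\<And>i. \<not> i < n \<Longrightarrow> x i = undefined) \<Longrightarrow> x \<in> words X n"
  unfolding words_def by (auto simp: PiE_iff extensional_def)

lemma words_eqI:
  "x \<in> words X n \<Longrightarrow> y \<in> words X n \<Longrightarrow> (\<And>i. i < n \<Longrightarrow> x i = y i) \<Longrightarrow> x = y"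
  unfolding words_def by (erule PiE_ext) auto

lemma less_3_cases: "(i::nat) < 3 \<Longrightarrow> i = 0 \<or> i = 1 \<or> i = 2"
  by auto

lemma words_3_eqI:
  "x \<in> words X 3 \<Longrightarrow> y \<in> words X 3 \<Longrightarrow> x 0 = y 0 \<Longrightarrow> x 1 = y 1 \<Longrightarrow> x 2 = y 2 \<Longrightarrow> x = y"
  by (erule words_eqI, assumption) (auto dest: less_3_cases)

lemma is_AONT_Suc_if_coordinates_cancel:
  assumes fin: "finite X"
    and bij: "bij_betw \<phi> (words X (Suc t)) (words X (Suc t))"
    and cancel: "\<And>x y j k. x \<in> words X (Suc t) \<Longrightarrow> y \<in> words X (Suc t) \<Longrightarrow> j < Suc t \<Longrightarrow>
        (\<forall>i. i \<noteq> k \<longrightarrow> x i = y i) \<Longrightarrow> \<phi> x j = \<phi> y j \<Longrightarrow> x = y"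
  shows "is_AONT t (Suc t) X \<phi>"
  unfolding is_AONT_def
proof (intro conjI allI impI bij)
  fix I J assume IJ: "I \<subseteq> {0..<Suc t} \<and> card I = t \<and> J \<subseteq> {0..<Suc t} \<and> card J = Suc t - t"
  have "card ({0..<Suc t} - I) = 1"
    using IJ card_Diff_subset[of I "{0..<Suc t}"] finite_subset[of I "{0..<Suc t}"] by simp
  then obtain k where k: "{0..<Suc t} - I = {k}" by (rule card_1_singletonE)
  have "card J = 1" using IJ by simp
  then obtain j where j: "J = {j}" by (rule card_1_singletonE)
  have "j < Suc t" using IJ j by auto
  have finI: "finite I" using IJ finite_subset by blast
  show "bij_betw (\<lambda>x. (restrict x I, restrict (\<phi> x) J)) (words X (Suc t))
      (PiE I (\<lambda>_. X) \<times> PiE J (\<lambda>_. X))"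
  proof (rule bij_betw_if_inj_on_card_eq)
    show "finite (PiE I (\<lambda>_. X) \<times> PiE J (\<lambda>_. X))"
      using fin finI j by (simp add: finite_PiE)
    show "card (words X (Suc t)) = card (PiE I (\<lambda>_. X) \<times> PiE J (\<lambda>_. X))"
      using fin finI j IJ by (simp add: card_words card_PiE card_cartesian_product)
    show "(\<lambda>x. (restrict x I, restrict (\<phi> x) J)) ` words X (Suc t) \<subseteq> PiE I (\<lambda>_. X) \<times> PiE J (\<lambda>_. X)"
    proof clarify
      fix x assume x: "x \<in> words X (Suc t)"
      then have "\<phi> x \<in> words X (Suc t)" using bij_betwE[OF bij] by blast
      with x show "restrict x I \<in> PiE I (\<lambda>_. X) \<and> restrict (\<phi> x) J \<in> PiE J (\<lambda>_. X)"
        using IJ unfolding words_def by auto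
    qed
    show "inj_on (\<lambda>x. (restrict x I, restrict (\<phi> x) J)) (words X (Suc t))"
    proof (rule inj_onI)
      fix x y assume x: "x \<in> words X (Suc t)" and y: "y \<in> words X (Suc t)"
        and eq: "(restrict x I, restrict (\<phi> x) J) = (restrict y I, restrict (\<phi> y) J)"
      then have agree_I: "restrict x I = restrict y I"
        and agree_J: "restrict (\<phi> x) J = restrict (\<phi> y) J"
        by simp_all
      have "x i = y i" if "i \<noteq> k" for i
      proof (cases "i < Suc t")
        case True
        then have "i \<in> {0..<Suc t} - {k}" using that by simp
        then have "i \<in> I" using k by blast
        then show ?thesis using fun_cong[OF agree_I, of i] by simp
      next
        case False
        then show ?thesis using words_undefined[OF x] words_undefined[OF y] by simp
      qed
      moreover have "\<phi> x j = \<phi> y j" using fun_cong[OF agree_J, of j] j by simp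
      ultimately show "x = y" using cancel[OF x y \<open>j < Suc t\<close>] by blast
    qed
  qed
qed simp

text \<open>Only injectivity of rows and columns is required: over a finite alphabet it already
  makes them permutations.\<close>

definition latin_square :: "'a set \<Rightarrow> ('a \<Rightarrow> 'a \<Rightarrow> 'a) \<Rightarrow> bool" where
  "latin_square X L \<longleftrightarrow> (\<forall>a\<in>X. \<forall>b\<in>X. L a b \<in> X) \<and>
     (\<forall>a\<in>X. inj_on (L a) X) \<and> (\<forall>b\<in>X. inj_on (\<lambda>a. L a b) X)"

definition orthogonal_squares :: "'a set \<Rightarrow> ('a \<Rightarrow> 'a \<Rightarrow> 'a) \<Rightarrow> ('a \<Rightarrow> 'a \<Rightarrow> 'a) \<Rightarrow> bool" where
  "orthogonal_squares X L M \<longleftrightarrow> inj_on (\<lambda>(a, b). (L a b, M a b)) (X \<times> X)"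

lemma latin_square_closed: "latin_square X L \<Longrightarrow> a \<in> X \<Longrightarrow> b \<in> X \<Longrightarrow> L a b \<in> X"
  unfolding latin_square_def by blast

lemma latin_square_cancel_right:
  "latin_square X L \<Longrightarrow> L a b = L a b' \<Longrightarrow> a \<in> X \<Longrightarrow> b \<in> X \<Longrightarrow> b' \<in> X \<Longrightarrow> b = b'"
  unfolding latin_square_def by (meson inj_onD)

lemma latin_square_cancel_left:
  "latin_square X L \<Longrightarrow> L a b = L a' b \<Longrightarrow> a \<in> X \<Longrightarrow> a' \<in> X \<Longrightarrow> b \<in> X \<Longrightarrow> a = a'"
  unfolding latin_square_def by (meson inj_onD)

lemma orthogonal_squares_cancel:
  "orthogonal_squares X L M \<Longrightarrow> L a b = L a' b' \<Longrightarrow> M a b = M a' b' \<Longrightarrow>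
    a \<in> X \<Longrightarrow> b \<in> X \<Longrightarrow> a' \<in> X \<Longrightarrow> b' \<in> X \<Longrightarrow> a = a' \<and> b = b'"
  unfolding orthogonal_squares_def inj_on_def by fastforce

lemma latin_square_compose_cancel:
  assumes P: "latin_square X P" and Q: "latin_square X Q"
    and X: "a \<in> X" "b \<in> X" "c \<in> X" "a' \<in> X" "b' \<in> X" "c' \<in> X"
    and eq: "Q (P a b) c = Q (P a' b') c'"
    and two: "(a = a' \<and> b = b') \<or> (a = a' \<and> c = c') \<or> (b = b' \<and> c = c')"
  shows "a = a' \<and> b = b' \<and> c = c'"
proof -
  have Pab: "P a b \<in> X" and Pab': "P a' b' \<in> X"
    using latin_square_closed[OF P] X by blast+
  from two show ?thesis
  proof (elim disjE conjE)
    assume "a = a'" "b = b'"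
    with eq have "Q (P a b) c = Q (P a b) c'" by simp
    then show ?thesis
      using latin_square_cancel_right[OF Q _ Pab X(3,6)] \<open>a = a'\<close> \<open>b = b'\<close> by blast
  next
    assume "a = a'" "c = c'"
    with eq have "Q (P a b) c = Q (P a' b') c" by simp
    then have "P a b = P a b'"
      using latin_square_cancel_left[OF Q _ Pab Pab' X(3)] \<open>a = a'\<close> by simp
    then show ?thesis
      using latin_square_cancel_right[OF P _ X(1,2,5)] \<open>a = a'\<close> \<open>c = c'\<close> by blast
  next
    assume "b = b'" "c = c'"
    with eq have "Q (P a b) c = Q (P a' b') c" by simp
    then have "P a b = P a' b"
      using latin_square_cancel_left[OF Q _ Pab Pab' X(3)] \<open>b = b'\<close> by simp
    then show ?thesis
      using latin_square_cancel_left[OF P _ X(1,4,2)] \<open>b = b'\<close> \<open>c = c'\<close> by blast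
  qed
qed

lemma OA_entry_mem: "is_OA t k X A \<Longrightarrow> i < card X ^ t \<Longrightarrow> c < k \<Longrightarrow> A i c \<in> X"
  unfolding is_OA_def by (meson words_mem)

lemma OA_rows_eqI:
  assumes "is_OA t k X A" "C \<subseteq> {0..<k}" "card C = t"
    and "i < card X ^ t" "i' < card X ^ t" "\<forall>c\<in>C. A i c = A i' c"
  shows "i = i'"
proof -
  have "restrict (A i) C \<in> PiE C (\<lambda>_. X)"
    using OA_entry_mem[OF assms(1,4)] assms(2) by auto
  then have "\<exists>!r. r < card X ^ t \<and> restrict (A r) C = restrict (A i) C"
    using assms(1-3) unfolding is_OA_def by blast
  moreover have "restrict (A i') C = restrict (A i) C"
    using assms(6) by (auto intro: restrict_ext)
  ultimately show ?thesis using assms(4,5) by blast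
qed

lemma OA_row_exists:
  assumes "is_OA t k X A" "C \<subseteq> {0..<k}" "card C = t" "y \<in> PiE C (\<lambda>_. X)"
  shows "\<exists>i < card X ^ t. \<forall>c\<in>C. A i c = y c"
proof -
  obtain i where "i < card X ^ t" "restrict (A i) C = y"
    using assms unfolding is_OA_def by blast
  then show ?thesis by (metis restrict_apply')
qed

definition OA_row :: "'a set \<Rightarrow> (nat \<Rightarrow> nat \<Rightarrow> 'a) \<Rightarrow> nat \<Rightarrow> nat \<Rightarrow> 'a \<Rightarrow> 'a \<Rightarrow> nat" where
  "OA_row X A c d a b = (SOME i. i < card X ^ 2 \<and> A i c = a \<and> A i d = b)"

lemma OA_row_spec:
  assumes "is_OA 2 k X A" "c < k" "d < k" "c \<noteq> d" "a \<in> X" "b \<in> X"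
  shows "OA_row X A c d a b < card X ^ 2 \<and> A (OA_row X A c d a b) c = a \<and> A (OA_row X A c d a b) d = b"
proof -
  let ?y = "restrict (\<lambda>e. if e = c then a else b) {c, d}"
  have C: "{c, d} \<subseteq> {0..<k}" "card {c, d} = 2" using assms(2-4) by auto
  have "?y \<in> PiE {c, d} (\<lambda>_. X)" using assms(5,6) by auto
  then obtain i where "i < card X ^ 2" "\<forall>e\<in>{c, d}. A i e = ?y e"
    using OA_row_exists[OF assms(1) C] by blast
  then have "\<exists>i. i < card X ^ 2 \<and> A i c = a \<and> A i d = b" using assms(4) by auto
  then show ?thesis unfolding OA_row_def by (rule someI_ex)
qed

lemma OA_rows_eq_two_columns:
  assumes "is_OA 2 k X A" "c < k" "d < k" "c \<noteq> d"
    and "i < card X ^ 2" "i' < card X ^ 2" "A i c = A i' c" "A i d = A i' d"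
  shows "i = i'"
  using OA_rows_eqI[OF assms(1), of "{c, d}"] assms(2-8) by auto

lemma latin_square_OA_column:
  assumes OA: "is_OA 2 k X A" and "c < k" "d < k" "e < k" "distinct [c, d, e]"
  shows "latin_square X (\<lambda>a b. A (OA_row X A c d a b) e)"
proof -
  have "c \<noteq> d" using assms(5) by simp
  note row = OA_row_spec[OF OA \<open>c < k\<close> \<open>d < k\<close> \<open>c \<noteq> d\<close>]
  note same_row = OA_rows_eq_two_columns[OF OA]
  show ?thesis unfolding latin_square_def
  proof (intro conjI ballI inj_onI)
    fix a b assume "a \<in> X" "b \<in> X"
    then show "A (OA_row X A c d a b) e \<in> X"
      using row OA_entry_mem[OF OA _ \<open>e < k\<close>] assms(5) by simp
  next
    fix a b b' assume ab: "a \<in> X" "b \<in> X" "b' \<in> X"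
      and eq: "A (OA_row X A c d a b) e = A (OA_row X A c d a b') e"
    then have "OA_row X A c d a b = OA_row X A c d a b'"
      using same_row[of c e] row assms by simp
    then show "b = b'" using row[OF ab(1,2)] row[OF ab(1,3)] by metis
  next
    fix b a a' assume ab: "b \<in> X" "a \<in> X" "a' \<in> X"
      and eq: "A (OA_row X A c d a b) e = A (OA_row X A c d a' b) e"
    then have "OA_row X A c d a b = OA_row X A c d a' b"
      using same_row[of d e] row assms by simp
    then show "a = a'" using row[OF ab(2,1)] row[OF ab(3,1)] by metis
  qed
qed

lemma orthogonal_squares_OA_columns:
  assumes OA: "is_OA 2 k X A" and "c < k" "d < k" "e < k" "f < k" "distinct [c, d, e, f]"
  shows "orthogonal_squares X (\<lambda>a b. A (OA_row X A c d a b) e) (\<lambda>a b. A (OA_row X A c d a b) f)"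
  unfolding orthogonal_squares_def
proof (rule inj_onI, clarify)
  have "c \<noteq> d" using assms(6) by simp
  note row = OA_row_spec[OF OA \<open>c < k\<close> \<open>d < k\<close> this]
  fix a b a' b' assume ab: "a \<in> X" "b \<in> X" "a' \<in> X" "b' \<in> X"
    and eq: "A (OA_row X A c d a b) e = A (OA_row X A c d a' b') e"
      "A (OA_row X A c d a b) f = A (OA_row X A c d a' b') f"
  then have "OA_row X A c d a b = OA_row X A c d a' b'"
    using OA_rows_eq_two_columns[OF OA, of e f] row assms by simp
  then show "a = a' \<and> b = b'" using row[OF ab(1,2)] row[OF ab(3,4)] by metis
qed

definition AONT_of_squares ::
    "('a \<Rightarrow> 'a \<Rightarrow> 'a) \<Rightarrow> ('a \<Rightarrow> 'a \<Rightarrow> 'a) \<Rightarrow> (nat \<Rightarrow> 'a) \<Rightarrow> nat \<Rightarrow> 'a" where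
  "AONT_of_squares L M x =
    (\<lambda>i. if i = 0 then L (L (x 0) (x 1)) (x 2)
         else if i = 1 then M (L (x 0) (x 1)) (x 2)
         else if i = 2 then L (M (x 0) (x 1)) (x 2)
         else undefined)"

lemma AONT_of_squares_coordinate:
  assumes "latin_square X L" "latin_square X M" "j < 3"
  obtains P Q where "latin_square X P" "latin_square X Q"
    "\<And>x. AONT_of_squares L M x j = Q (P (x 0) (x 1)) (x 2)"
proof -
  consider "j = 0" | "j = 1" | "j = 2" using less_3_cases[OF assms(3)] by blast
  then show ?thesis
  proof cases
    case 1
    then show ?thesis using that[OF assms(1,1)] by (simp add: AONT_of_squares_def)
  next
    case 2
    then show ?thesis using that[OF assms(1,2)] by (simp add: AONT_of_squares_def)
  next
    case 3
    then show ?thesis using that[OF assms(2,1)] by (simp add: AONT_of_squares_def)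
  qed
qed

lemma AONT_of_squares_words:
  assumes L: "latin_square X L" and M: "latin_square X M" and x: "x \<in> words X 3"
  shows "AONT_of_squares L M x \<in> words X 3"
proof (rule words_memI)
  fix j :: nat assume "j < 3"
  then obtain P Q where P: "latin_square X P" and Q: "latin_square X Q"
      and PQ: "\<And>z. AONT_of_squares L M z j = Q (P (z 0) (z 1)) (z 2)"
    using AONT_of_squares_coordinate[OF L M \<open>j < 3\<close>] by blast
  have "P (x 0) (x 1) \<in> X" by (rule latin_square_closed[OF P]) (simp_all add: words_mem[OF x])
  then show "AONT_of_squares L M x j \<in> X"
    unfolding PQ by (rule latin_square_closed[OF Q]) (simp add: words_mem[OF x])
qed (simp add: AONT_of_squares_def)

lemma inj_on_AONT_of_squares:
  assumes L: "latin_square X L" and M: "latin_square X M" and LM: "orthogonal_squares X L M"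
  shows "inj_on (AONT_of_squares L M) (words X 3)"
proof (rule inj_onI)
  fix x y assume x: "x \<in> words X 3" and y: "y \<in> words X 3"
    and eq: "AONT_of_squares L M x = AONT_of_squares L M y"
  have X: "x 0 \<in> X" "x 1 \<in> X" "x 2 \<in> X" "y 0 \<in> X" "y 1 \<in> X" "y 2 \<in> X"
    using words_mem[OF x] words_mem[OF y] by simp_all
  have out: "L (L (x 0) (x 1)) (x 2) = L (L (y 0) (y 1)) (y 2)"
    "M (L (x 0) (x 1)) (x 2) = M (L (y 0) (y 1)) (y 2)"
    "L (M (x 0) (x 1)) (x 2) = L (M (y 0) (y 1)) (y 2)"
    using fun_cong[OF eq, of 0] fun_cong[OF eq, of 1] fun_cong[OF eq, of 2]
    by (simp_all add: AONT_of_squares_def)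
  have "L (x 0) (x 1) \<in> X" "L (y 0) (y 1) \<in> X" "M (x 0) (x 1) \<in> X" "M (y 0) (y 1) \<in> X"
    using latin_square_closed[OF L] latin_square_closed[OF M] X by simp_all
  note closed = this
  have u: "L (x 0) (x 1) = L (y 0) (y 1)" and x2: "x 2 = y 2"
    using orthogonal_squares_cancel[OF LM out(1,2) closed(1) X(3) closed(2) X(6)] by simp_all
  from out(3) x2 have "L (M (x 0) (x 1)) (x 2) = L (M (y 0) (y 1)) (x 2)" by simp
  then have w: "M (x 0) (x 1) = M (y 0) (y 1)"
    using latin_square_cancel_left[OF L _ closed(3,4) X(3)] by simp
  have "x 0 = y 0 \<and> x 1 = y 1" by (rule orthogonal_squares_cancel[OF LM u w X(1,2,4,5)])
  then show "x = y" by (elim conjE) (rule words_3_eqI[OF x y _ _ x2])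
qed

lemma is_AONT_of_squares:
  assumes "finite X" and L: "latin_square X L" and M: "latin_square X M"
    and LM: "orthogonal_squares X L M"
  shows "is_AONT 2 3 X (AONT_of_squares L M)"
proof -
  have "finite (words X 3)" using \<open>finite X\<close> by (simp add: words_def finite_PiE)
  moreover have "AONT_of_squares L M ` words X 3 \<subseteq> words X 3"
    using AONT_of_squares_words[OF L M] by blast
  ultimately have "bij_betw (AONT_of_squares L M) (words X 3) (words X 3)"
    using inj_on_AONT_of_squares[OF L M LM] by (intro bij_betw_if_inj_on_card_eq) simp_all
  moreover have "x = y"
    if x: "x \<in> words X 3" and y: "y \<in> words X 3" and "j < 3"
      and agree: "\<forall>i. i \<noteq> k \<longrightarrow> x i = y i"
      and eq: "AONT_of_squares L M x j = AONT_of_squares L M y j" for x y j k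
  proof -
    obtain P Q where P: "latin_square X P" and Q: "latin_square X Q"
        and PQ: "\<And>z. AONT_of_squares L M z j = Q (P (z 0) (z 1)) (z 2)"
      using AONT_of_squares_coordinate[OF L M \<open>j < 3\<close>] by blast
    have "Q (P (x 0) (x 1)) (x 2) = Q (P (y 0) (y 1)) (y 2)" using eq unfolding PQ .
    moreover have "(x 0 = y 0 \<and> x 1 = y 1) \<or> (x 0 = y 0 \<and> x 2 = y 2) \<or> (x 1 = y 1 \<and> x 2 = y 2)"
      using agree[rule_format, of 0] agree[rule_format, of 1] agree[rule_format, of 2] by force
    ultimately have "x 0 = y 0 \<and> x 1 = y 1 \<and> x 2 = y 2"
      using words_mem[OF x] words_mem[OF y]
      by (intro latin_square_compose_cancel[OF P Q]) simp_all
    then show "x = y" by (elim conjE) (rule words_3_eqI[OF x y])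
  qed
  ultimately show ?thesis
    using is_AONT_Suc_if_coordinates_cancel[OF \<open>finite X\<close>, of "AONT_of_squares L M" 2]
    by (simp add: numeral_3_eq_3)
qed

theorem theorem3p7:
  fixes X :: "'a set" and v :: nat
  assumes "finite X" and "card X = v" and "v \<ge> 1"
    and "OA_exists 2 4 X"
  shows "\<exists>\<phi>. is_AONT 2 3 X \<phi>"
proof -
  obtain A where OA: "is_OA 2 4 X A" using assms(4) unfolding OA_exists_def by blast
  let ?L = "\<lambda>a b. A (OA_row X A 0 1 a b) 2" and ?M = "\<lambda>a b. A (OA_row X A 0 1 a b) 3"
  have "latin_square X ?L" "latin_square X ?M"
    using latin_square_OA_column[OF OA] by simp_all
  moreover have "orthogonal_squares X ?L ?M"
    using orthogonal_squares_OA_columns[OF OA] by simp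
  ultimately show ?thesis
    using is_AONT_of_squares[OF \<open>finite X\<close>] by blast
qed

end
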